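(* For every $a>0$ there is a constant $C$ such that $|v(x)|\le C(1+|x|^{p-a})$ for all $x\notin K$.
   Context: Let $d\ge2$, $\Sigma$ an open connected subset of $\mathbb S^{d-1}$ regular for the Laplace–Beltrami operator $L$, $K=\{t\theta:t>0,\theta\in\Sigma\}$. $\lambda_1>0$ and $m_1>0$ are the principal Dirichlet eigenvalue and eigenfunction ($Lm_1=-\lambda_1m_1$ in $\Sigma$, $m_1=0$ on $\partial\Sigma$), $p=\sqrt{\lambda_1+(d/2-1)^2}-(d/2-1)$, $u(x)=|x|^pm_1(x/|x|)$. Assume $m_1$ extends, as a solution of $Lm_1=-\lambda_1m_1$, to an open connected $\widetilde\Sigma\supset\Sigma$ with ${\rm dist}(\partial\Sigma,\partial\widetilde\Sigma)>0$, so that $u$ (same formula) is harmonic on the cone $\widetilde K$ generated by $\widetilde\Sigma$. For $\eta>0$ let $K^\eta=\{y:|y-x|<\eta|x|\text{ for some }x\in K\}$, with $\eta$ fixed so that $K\subset K^{4\eta}\subset\widetilde K$. For $a>0$ let $G=K^\eta\cap(K\cup\{x\notin K:{\rm dist}(x,\partial K)\le|x|^{1-a}\})$ and $v(x)=u(x)$ for $x\in G$, $v(x)=|x|^{p-a}$ for $x\notin G$. *)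

theory Defs
  imports "HOL-Analysis.Analysis"
begin

definition cone_of :: "'a::euclidean_space set \<Rightarrow> 'a set" where
  "cone_of S = {t *\<^sub>R \<theta> | t \<theta>. t > 0 \<and> \<theta> \<in> S}"

definition C2_on :: "'a::euclidean_space set \<Rightarrow> ('a \<Rightarrow> real) \<Rightarrow> bool" where
  "C2_on S f \<longleftrightarrow> (\<exists>(f' :: 'a \<Rightarrow> 'a \<Rightarrow>\<^sub>L real) (f'' :: 'a \<Rightarrow> 'a \<Rightarrow>\<^sub>L ('a \<Rightarrow>\<^sub>L real)).
      (\<forall>x\<in>S. (f has_derivative blinfun_apply (f' x)) (at x)) \<and>
      (\<forall>x\<in>S. (f' has_derivative blinfun_apply (f'' x)) (at x)) \<and>
      continuous_on S f'')"

definition laplacian :: "('a::euclidean_space \<Rightarrow> real) \<Rightarrow> 'a \<Rightarrow> real" where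
  "laplacian f x = (\<Sum>b\<in>Basis. deriv (\<lambda>s. deriv (\<lambda>t. f (x + t *\<^sub>R b)) s) 0)"

text \<open>Laplace--Beltrami operator on the unit sphere, via the 0-homogeneous extension.\<close>
definition LB :: "('a::euclidean_space \<Rightarrow> real) \<Rightarrow> 'a \<Rightarrow> real" where
  "LB f \<theta> = laplacian (\<lambda>x. f (x /\<^sub>R norm x)) \<theta>"

definition sph_C2 :: "'a::euclidean_space set \<Rightarrow> ('a \<Rightarrow> real) \<Rightarrow> bool" where
  "sph_C2 S f \<longleftrightarrow> C2_on (cone_of S) (\<lambda>x. f (x /\<^sub>R norm x))"

definition sph_boundary :: "'a::euclidean_space set \<Rightarrow> 'a set" where
  "sph_boundary S = closure S - S"

definition dirichlet_eigenpair :: "'a::euclidean_space set \<Rightarrow> real \<Rightarrow> ('a \<Rightarrow> real) \<Rightarrow> bool" where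
  "dirichlet_eigenpair S lam m \<longleftrightarrow>
     sph_C2 S m \<and> continuous_on (closure S) m \<and>
     (\<forall>\<theta>\<in>S. LB m \<theta> = - lam * m \<theta>) \<and>
     (\<forall>\<theta>\<in>sph_boundary S. m \<theta> = 0) \<and> (\<exists>\<theta>\<in>S. m \<theta> \<noteq> 0)"

definition LB_regular :: "'a::euclidean_space set \<Rightarrow> bool" where
  "LB_regular S \<longleftrightarrow> (\<forall>g. continuous_on (sph_boundary S) g \<longrightarrow>
     (\<exists>h. sph_C2 S h \<and> continuous_on (closure S) h \<and> (\<forall>\<theta>\<in>S. LB h \<theta> = 0) \<and>
          (\<forall>\<theta>\<in>sph_boundary S. h \<theta> = g \<theta>)))"

definition cone_nbhd :: "'a::euclidean_space set \<Rightarrow> real \<Rightarrow> 'a set" where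
  "cone_nbhd K eta = {y. \<exists>x\<in>K. dist y x < eta * norm x}"

end

theory Submission
  imports Defs
begin

text \<open>Write \<open>u x = norm x powr p * M x\<close> with \<open>M x = m1 (x /\<^sub>R norm x)\<close> homogeneous of
  degree 0. Off \<open>G a\<close> the bound is trivial. A point \<open>x \<in> G a\<close> outside \<open>K\<close> lies within
  \<open>norm x powr (1 - a)\<close> of \<open>frontier K\<close>, where \<open>M\<close> vanishes because \<open>m1\<close> satisfies the
  Dirichlet condition. Rescaling by \<open>norm x\<close> moves it to the unit sphere, within
  \<open>norm x powr -a\<close> of a zero of \<open>M\<close>, inside a fixed compact shell contained in the extended
  cone, on which \<open>M\<close> is \<open>C\<^sup>1\<close> and hence Lipschitz. So \<open>M x = O(norm x powr -a)\<close>
  and \<open>u x = O(norm x powr (p - a))\<close> for large \<open>x\<close>, while \<open>u\<close> is bounded near the origin.\<close>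

lemma mem_cone_of_iff:
  fixes S :: "'a::euclidean_space set"
  assumes "S \<subseteq> sphere 0 1"
  shows "y \<in> cone_of S \<longleftrightarrow> y \<noteq> 0 \<and> y /\<^sub>R norm y \<in> S"
proof
  assume "y \<in> cone_of S"
  then obtain t \<theta> where h: "y = t *\<^sub>R \<theta>" "t > 0" "\<theta> \<in> S" unfolding cone_of_def by auto
  moreover have "norm \<theta> = 1" using assms h by auto
  ultimately show "y \<noteq> 0 \<and> y /\<^sub>R norm y \<in> S" by auto
next
  assume h: "y \<noteq> 0 \<and> y /\<^sub>R norm y \<in> S"
  then have "y = norm y *\<^sub>R (y /\<^sub>R norm y)" "norm y > 0" by auto
  then show "y \<in> cone_of S" unfolding cone_of_def using h by blast
qed

lemma scaleR_mem_cone_of: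
  assumes "w \<in> cone_of S" "c > 0"
  shows "c *\<^sub>R w \<in> cone_of S"
proof -
  obtain t \<theta> where "w = t *\<^sub>R \<theta>" "t > 0" "\<theta> \<in> S" using assms(1) unfolding cone_of_def by auto
  then have "c *\<^sub>R w = (c * t) *\<^sub>R \<theta>" "c * t > 0" using assms(2) by auto
  with \<open>\<theta> \<in> S\<close> show ?thesis unfolding cone_of_def by blast
qed

lemma scaleR_mem_cone_nbhd_cone_of:
  assumes "x \<in> cone_nbhd (cone_of S) e" "c > 0"
  shows "c *\<^sub>R x \<in> cone_nbhd (cone_of S) e"
proof -
  obtain w where w: "w \<in> cone_of S" "dist x w < e * norm w"
    using assms(1) unfolding cone_nbhd_def by auto
  have "dist (c *\<^sub>R x) (c *\<^sub>R w) = c * dist x w"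
    using assms(2) by (simp add: dist_norm flip: scaleR_diff_right)
  also have "\<dots> < e * norm (c *\<^sub>R w)"
    using w(2) assms(2) by (simp add: mult.left_commute)
  finally show ?thesis
    unfolding cone_nbhd_def using scaleR_mem_cone_of[OF w(1) assms(2)] by blast
qed

lemma cball_subset_cone_nbhd:
  assumes x: "x \<in> cone_nbhd K e" and e: "e > 0"
  shows "cball x (e * norm x / (1 + e)) \<subseteq> cone_nbhd K (2 * e)"
proof
  fix y assume y: "y \<in> cball x (e * norm x / (1 + e))"
  obtain w where w: "w \<in> K" "dist x w < e * norm w" using x unfolding cone_nbhd_def by auto
  have "norm x \<le> norm w + dist x w"
    using norm_triangle_ineq[of "x - w" w] by (simp add: dist_norm)
  then have "norm x < (1 + e) * norm w" using w(2) by (simp add: algebra_simps)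
  then have "e * norm x / (1 + e) \<le> e * norm w"
    using e by (simp add: less_eq_real_def mult.commute mult_imp_div_pos_less)
  moreover have "dist y w \<le> dist y x + dist x w" by (rule dist_triangle)
  ultimately have "dist y w < 2 * e * norm w"
    using y w(2) by (simp add: dist_commute)
  then show "y \<in> cone_nbhd K (2 * e)" unfolding cone_nbhd_def using w(1) by blast
qed

lemma closure_cone_nbhd_subset:
  assumes e: "e > 0"
  shows "closure (cone_nbhd K e) - {0} \<subseteq> cone_nbhd K (2 * e)"
proof
  fix y assume "y \<in> closure (cone_nbhd K e) - {0}"
  then have yc: "y \<in> closure (cone_nbhd K e)" and "y \<noteq> 0" by auto
  define \<delta> where "\<delta> = e * norm y / (1 + 2 * e)"
  have "\<delta> > 0" using e \<open>y \<noteq> 0\<close> by (simp add: \<delta>_def)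
  then obtain y' where y': "y' \<in> cone_nbhd K e" "dist y' y < \<delta>"
    using yc closure_approachable by blast
  have "norm y \<le> norm y' + dist y' y"
    using norm_triangle_ineq[of y' "y - y'"] by (simp add: dist_norm norm_minus_commute)
  then have "e * (norm y - \<delta>) / (1 + e) \<le> e * norm y' / (1 + e)"
    using y'(2) e by (intro divide_right_mono mult_left_mono) auto
  moreover have "e * (norm y - \<delta>) = (1 + e) * \<delta>"
    using e by (simp add: \<delta>_def field_simps)
  then have "e * (norm y - \<delta>) / (1 + e) = \<delta>"
    using e by simp
  ultimately have "y \<in> cball y' (e * norm y' / (1 + e))"
    using y'(2) by (simp add: dist_commute)
  then show "y \<in> cone_nbhd K (2 * e)" using cball_subset_cone_nbhd[OF y'(1) e] by blast
qed

lemma open_cone_of: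
  fixes S :: "'a::euclidean_space set"
  assumes "openin (top_of_set (sphere 0 1)) S"
  shows "open (cone_of S)"
proof -
  have "S \<subseteq> sphere 0 1" using assms by (rule openin_imp_subset)
  obtain U where U: "open U" "S = sphere 0 1 \<inter> U" using assms by (auto simp: openin_open)
  have "y \<in> cone_of S \<longleftrightarrow> y \<in> (\<lambda>y. y /\<^sub>R norm y) -` U \<inter> - {0}" for y
    using mem_cone_of_iff[OF \<open>S \<subseteq> sphere 0 1\<close>, of y] U(2) by auto
  then have "cone_of S = (\<lambda>y. y /\<^sub>R norm y) -` U \<inter> - {0}" by blast
  moreover have "continuous_on (- {0}) (\<lambda>y::'a. y /\<^sub>R norm y)"
    by (intro continuous_intros) auto
  ultimately show ?thesis
    using continuous_on_open_vimage[of "- {0}" "\<lambda>y::'a. y /\<^sub>R norm y"] U(1) by auto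
qed

lemma frontier_cone_of_direction:
  fixes S :: "'a::euclidean_space set"
  assumes S: "S \<subseteq> sphere 0 1" "openin (top_of_set (sphere 0 1)) S"
    and z: "z \<in> frontier (cone_of S)" "z \<noteq> 0"
  shows "z /\<^sub>R norm z \<in> sph_boundary S"
proof -
  have "z \<in> closure (cone_of S)" "z \<notin> cone_of S"
    using z(1) open_cone_of[OF S(2)] by (auto simp: frontier_def interior_open)
  obtain s where s: "\<And>n. s n \<in> cone_of S" "s \<longlonglongrightarrow> z"
    using \<open>z \<in> closure (cone_of S)\<close> unfolding closure_sequential by blast
  have "isCont (\<lambda>y. y /\<^sub>R norm y) z" using z(2) by (intro continuous_intros) auto
  then have "(\<lambda>n. s n /\<^sub>R norm (s n)) \<longlonglongrightarrow> z /\<^sub>R norm z"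
    by (rule isCont_tendsto_compose[OF _ s(2)])
  moreover have "\<And>n. s n /\<^sub>R norm (s n) \<in> S" using s(1) by (simp add: mem_cone_of_iff[OF S(1)])
  ultimately have "z /\<^sub>R norm z \<in> closure S"
    unfolding closure_sequential by (intro exI[where x = "\<lambda>n. s n /\<^sub>R norm (s n)"]) auto
  moreover have "z /\<^sub>R norm z \<notin> S"
    using \<open>z \<notin> cone_of S\<close> z(2) by (simp add: mem_cone_of_iff[OF S(1)])
  ultimately show ?thesis by (simp add: sph_boundary_def)
qed

lemma lipschitz_on_segments_of_compact:
  fixes f :: "'a::real_normed_vector \<Rightarrow> 'b::real_normed_vector"
  assumes "compact C"
    and "\<And>y. y \<in> C \<Longrightarrow> (f has_derivative blinfun_apply (f' y)) (at y)"
    and "continuous_on C f'"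
  shows "\<exists>L>0. \<forall>x z. closed_segment x z \<subseteq> C \<longrightarrow> norm (f x - f z) \<le> L * norm (x - z)"
proof -
  obtain L where L: "L > 0" "\<And>y. y \<in> C \<Longrightarrow> norm (f' y) \<le> L"
    using compact_imp_bounded[OF compact_continuous_image[OF assms(3,1)]]
    unfolding bounded_pos by auto
  have "norm (f x - f z) \<le> L * norm (x - z)" if "closed_segment x z \<subseteq> C" for x z
  proof (rule differentiable_bound[where f' = "\<lambda>y. blinfun_apply (f' y)"])
    show "\<And>y. y \<in> closed_segment x z \<Longrightarrow>
        (f has_derivative blinfun_apply (f' y)) (at y within closed_segment x z)"
      using that assms(2) by (auto intro: has_derivative_at_withinI)
    show "\<And>y. y \<in> closed_segment x z \<Longrightarrow> onorm (blinfun_apply (f' y)) \<le> L"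
      using that L by (auto simp flip: norm_blinfun.rep_eq)
  qed auto
  then show ?thesis using L(1) by blast
qed

lemma powr_mult_le_one_plus_powr:
  fixes r p a t C :: real
  assumes "r > 0" "p > 0" "0 \<le> t" "t \<le> C" "t \<le> C * r powr (- a)"
  shows "r powr p * t \<le> C * (1 + r powr (p - a))"
proof -
  have "0 \<le> C" "0 \<le> C * r powr (p - a)" using assms by simp_all
  moreover have "r powr p * t \<le> C \<or> r powr p * t \<le> C * r powr (p - a)"
  proof (cases "r \<le> 1")
    case True
    then have "r powr p * t \<le> t"
      using assms powr_le1[of p r] by (simp add: mult_left_le_one_le)
    then show ?thesis using assms by linarith
  next
    case False
    have "r powr p * t \<le> r powr p * (C * r powr (- a))"
      using assms by (simp add: mult_left_mono)
    also have "\<dots> = C * r powr (p - a)"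
      using assms by (simp add: powr_diff powr_minus divide_inverse)
    finally show ?thesis ..
  qed
  ultimately show ?thesis unfolding distrib_left mult_1_right by (elim disjE) linarith+
qed

lemma sqrt_add_square_gt:
  fixes lam q :: real
  assumes "lam > 0"
  shows "q < sqrt (lam + q\<^sup>2)"
proof -
  have "q \<le> sqrt (q\<^sup>2)" by simp
  also have "\<dots> < sqrt (lam + q\<^sup>2)" using assms by (intro real_sqrt_less_mono) simp
  finally show ?thesis .
qed

lemma sph_C2_continuous_derivative:
  fixes m :: "'a::euclidean_space \<Rightarrow> real"
  assumes "sph_C2 St m"
  obtains F :: "'a \<Rightarrow> 'a \<Rightarrow>\<^sub>L real" where
    "\<forall>y\<in>cone_of St. ((\<lambda>y. m (y /\<^sub>R norm y)) has_derivative blinfun_apply (F y)) (at y)"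
    "continuous_on (cone_of St) F"
proof -
  obtain F :: "'a \<Rightarrow> 'a \<Rightarrow>\<^sub>L real" and F' :: "'a \<Rightarrow> 'a \<Rightarrow>\<^sub>L ('a \<Rightarrow>\<^sub>L real)" where
    F: "\<forall>y\<in>cone_of St. ((\<lambda>y. m (y /\<^sub>R norm y)) has_derivative blinfun_apply (F y)) (at y)"
    and F': "\<forall>y\<in>cone_of St. (F has_derivative blinfun_apply (F' y)) (at y)"
    using assms unfolding sph_C2_def C2_on_def by (elim exE conjE) (rule that)
  have "continuous_on (cone_of St) F"
    using F' by (intro continuous_at_imp_continuous_on) (auto intro: has_derivative_continuous)
  with F show thesis by (rule that)
qed

lemma cball_subset_cone_nbhd_annulus:
  assumes x: "x \<in> cone_nbhd K e" "norm x = 1" and e: "e > 0"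
  shows "cball x (min (1/2) (e / (1 + e))) \<subseteq> cone_nbhd K (2 * e) \<inter> (cball 0 2 - ball 0 (1/2))"
proof
  fix y assume y: "y \<in> cball x (min (1/2) (e / (1 + e)))"
  then have "y \<in> cone_nbhd K (2 * e)" using cball_subset_cone_nbhd[OF x(1) e] x(2) by auto
  moreover have "1/2 \<le> norm y" "norm y \<le> 2"
    using y x(2) norm_triangle_ineq2[of x y] norm_triangle_ineq2[of y x]
    by (auto simp: dist_norm norm_minus_commute)
  ultimately show "y \<in> cone_nbhd K (2 * e) \<inter> (cball 0 2 - ball 0 (1/2))" by auto
qed

text \<open>The 0-homogeneous extension of \<open>m\<close> is \<open>C\<^sup>1\<close> on the compact shell
  \<open>closure (cone_nbhd K (2 * eta))\<close> between radii 1/2 and 2, which lies in \<open>cone_of St\<close>.\<close>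

lemma zero_homogeneous_lipschitz_near_unit_cone:
  fixes m :: "'a::euclidean_space \<Rightarrow> real" and K St :: "'a set"
  assumes m_C2: "sph_C2 St m" and eta: "eta > 0" "cone_nbhd K (4 * eta) \<subseteq> cone_of St"
  shows "\<exists>\<epsilon> L B. 0 < \<epsilon> \<and> \<epsilon> \<le> 1/2 \<and> 0 \<le> L \<and>
           (\<forall>x\<in>cone_nbhd K eta. norm x = 1 \<longrightarrow> \<bar>m x\<bar> \<le> B \<and>
              (\<forall>z. norm (x - z) \<le> \<epsilon> \<longrightarrow>
                 \<bar>m (x /\<^sub>R norm x) - m (z /\<^sub>R norm z)\<bar> \<le> L * norm (x - z)))"
proof -
  define M where "M = (\<lambda>y::'a. m (y /\<^sub>R norm y))"
  obtain F where F: "\<forall>y\<in>cone_of St. (M has_derivative blinfun_apply (F y)) (at y)"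
    and F_cont: "continuous_on (cone_of St) F"
    using sph_C2_continuous_derivative[OF m_C2] unfolding M_def by blast
  define Cs where "Cs = closure (cone_nbhd K (2 * eta)) \<inter> (cball 0 2 - ball 0 (1/2))"
  have "compact Cs" unfolding Cs_def compact_eq_bounded_closed
    by (intro conjI closed_Int closed_Diff bounded_Int) auto
  have "Cs \<subseteq> closure (cone_nbhd K (2 * eta)) - {0}" by (auto simp: Cs_def)
  also have "\<dots> \<subseteq> cone_nbhd K (4 * eta)"
    using closure_cone_nbhd_subset[of "2 * eta" K] eta(1) by simp
  finally have Cs_sub: "Cs \<subseteq> cone_of St" using eta(2) by simp
  obtain L where L: "L > 0"
    "\<And>x z. closed_segment x z \<subseteq> Cs \<Longrightarrow> norm (M x - M z) \<le> L * norm (x - z)"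
    using lipschitz_on_segments_of_compact[OF \<open>compact Cs\<close>] continuous_on_subset[OF F_cont Cs_sub]
      Cs_sub F by blast
  have "continuous_on Cs M"
    using Cs_sub F by (intro continuous_at_imp_continuous_on) (auto intro: has_derivative_continuous)
  then have "bounded (M ` Cs)" by (intro compact_imp_bounded compact_continuous_image \<open>compact Cs\<close>)
  then obtain B where B: "\<And>y. y \<in> Cs \<Longrightarrow> \<bar>M y\<bar> \<le> B"
    unfolding bounded_iff by auto
  define \<epsilon> where "\<epsilon> = min (1/2) (eta / (1 + eta))"
  have "0 < \<epsilon>" "\<epsilon> \<le> 1/2" using eta(1) by (auto simp: \<epsilon>_def min_def)
  have cball_sub: "cball x \<epsilon> \<subseteq> Cs" if "x \<in> cone_nbhd K eta" "norm x = 1" for x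
    using cball_subset_cone_nbhd_annulus[OF that eta(1)] closure_subset by (auto simp: Cs_def \<epsilon>_def)
  have "\<bar>m x\<bar> \<le> B \<and> (\<forall>z. norm (x - z) \<le> \<epsilon> \<longrightarrow> \<bar>M x - M z\<bar> \<le> L * norm (x - z))"
    if "x \<in> cone_nbhd K eta" "norm x = 1" for x
  proof (intro conjI allI impI)
    have "x \<in> Cs" using cball_sub[OF that] \<open>0 < \<epsilon>\<close> by auto
    then show "\<bar>m x\<bar> \<le> B" using B that(2) by (force simp: M_def)
    fix z assume "norm (x - z) \<le> \<epsilon>"
    then have "closed_segment x z \<subseteq> Cs"
      using cball_sub[OF that] \<open>0 < \<epsilon>\<close> by (intro order.trans[OF closed_segment_subset]) (auto simp: dist_norm)
    then show "\<bar>M x - M z\<bar> \<le> L * norm (x - z)" using L(2) by fastforce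
  qed
  then show ?thesis
    using \<open>0 < \<epsilon>\<close> \<open>\<epsilon> \<le> 1/2\<close> L(1) unfolding M_def by (intro exI[of _ \<epsilon>] exI[of _ L] exI[of _ B]) auto
qed

lemma frontier_point_within_scaled_infdist:
  fixes K :: "'a::euclidean_space set"
  assumes "K \<noteq> {}" "K \<noteq> UNIV" "x \<noteq> 0" "infdist x (frontier K) \<le> norm x * d"
  obtains z where "z \<in> frontier K" "norm (x /\<^sub>R norm x - z /\<^sub>R norm x) \<le> d"
proof -
  have "frontier K \<noteq> {}" using assms(1,2) by (rule frontier_not_empty)
  then obtain z where z: "z \<in> frontier K" "infdist x (frontier K) = dist x z"
    using infdist_attains_inf[OF frontier_closed] by blast
  have "norm (x /\<^sub>R norm x - z /\<^sub>R norm x) = dist x z / norm x"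
    by (simp add: dist_norm divide_inverse_commute flip: scaleR_diff_right)
  also have "\<dots> \<le> d" using assms(3,4) z(2) by (simp add: divide_le_eq mult.commute)
  finally show thesis using z(1) that by blast
qed

text \<open>Rescaled to the unit sphere, a point \<open>x\<close> of the thin layer lies within \<open>norm x powr -a\<close>
  of a rescaled frontier point, where the 0-homogeneous extension of \<open>m\<close> vanishes; Lipschitz
  continuity gives the decay once that distance is small, and boundedness covers the rest.\<close>

lemma zero_homogeneous_decay_near_frontier:
  fixes S St :: "'a::euclidean_space set" and m :: "'a \<Rightarrow> real" and eta a :: real
  assumes S: "S \<subseteq> sphere 0 1" "openin (top_of_set (sphere 0 1)) S"
    and m_boundary: "\<forall>\<theta>\<in>sph_boundary S. m \<theta> = 0"
    and m_C2: "sph_C2 St m"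
    and eta: "eta > 0" "cone_nbhd (cone_of S) (4 * eta) \<subseteq> cone_of St"
  shows "\<exists>C. \<forall>x\<in>cone_nbhd (cone_of S) eta. x \<noteq> 0 \<longrightarrow>
           infdist x (frontier (cone_of S)) \<le> norm x powr (1 - a) \<longrightarrow>
           \<bar>m (x /\<^sub>R norm x)\<bar> \<le> C \<and> \<bar>m (x /\<^sub>R norm x)\<bar> \<le> C * norm x powr (- a)"
proof -
  define K where "K = cone_of S"
  obtain \<epsilon> L B where \<epsilon>: "0 < \<epsilon>" "\<epsilon> \<le> 1/2" and "0 \<le> L"
    and near_unit: "\<And>x. x \<in> cone_nbhd K eta \<Longrightarrow> norm x = 1 \<Longrightarrow> \<bar>m x\<bar> \<le> B \<and>
        (\<forall>z. norm (x - z) \<le> \<epsilon> \<longrightarrow> \<bar>m (x /\<^sub>R norm x) - m (z /\<^sub>R norm z)\<bar> \<le> L * norm (x - z))"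
    using zero_homogeneous_lipschitz_near_unit_cone[OF m_C2 eta[unfolded K_def[symmetric]]] by blast
  define C where "C = max B (max L (B / \<epsilon>))"
  show ?thesis
  proof (intro exI[of _ C] ballI impI)
    fix x assume x: "x \<in> cone_nbhd (cone_of S) eta" "x \<noteq> 0"
      and x_dist: "infdist x (frontier (cone_of S)) \<le> norm x powr (1 - a)"
    define r where "r = norm x"
    have r: "r > 0" using x(2) by (simp add: r_def)
    have unit: "x /\<^sub>R r \<in> cone_nbhd K eta" "norm (x /\<^sub>R r) = 1"
      using scaleR_mem_cone_nbhd_cone_of[of x S eta "inverse r"] x r by (auto simp: K_def r_def)
    have m_x: "m (x /\<^sub>R norm x) = m (x /\<^sub>R r)" by (simp add: r_def)
    have bounded: "\<bar>m (x /\<^sub>R norm x)\<bar> \<le> B" using near_unit[OF unit] m_x by simp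
    have decay: "\<bar>m (x /\<^sub>R norm x)\<bar> \<le> L * r powr (- a)" if close: "r powr (- a) \<le> \<epsilon>"
    proof -
      have "K \<noteq> {}" using x(1) by (auto simp: K_def cone_nbhd_def)
      moreover have "K \<noteq> UNIV" using mem_cone_of_iff[OF S(1), of 0] by (auto simp: K_def)
      moreover have "infdist x (frontier K) \<le> norm x * r powr (- a)"
        using x_dist r powr_add[of r 1 "- a"] by (simp add: K_def r_def)
      ultimately obtain z where z: "z \<in> frontier K" and xz: "norm (x /\<^sub>R r - z /\<^sub>R r) \<le> r powr (- a)"
        using frontier_point_within_scaled_infdist x(2) unfolding r_def by blast
      have "z \<noteq> 0"
      proof
        assume "z = 0"
        then show False using xz close \<epsilon>(2) unit(2) by simp
      qed
      have z_dir: "(z /\<^sub>R r) /\<^sub>R norm (z /\<^sub>R r) = z /\<^sub>R norm z"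
        using r by (simp add: field_simps)
      have "m (z /\<^sub>R norm z) = 0"
        using frontier_cone_of_direction[OF S] z \<open>z \<noteq> 0\<close> m_boundary unfolding K_def by blast
      then have "m ((z /\<^sub>R r) /\<^sub>R norm (z /\<^sub>R r)) = 0" unfolding z_dir .
      moreover have "norm (x /\<^sub>R r - z /\<^sub>R r) \<le> \<epsilon>" using xz close by linarith
      then have "\<bar>m ((x /\<^sub>R r) /\<^sub>R norm (x /\<^sub>R r)) - m ((z /\<^sub>R r) /\<^sub>R norm (z /\<^sub>R r))\<bar>
          \<le> L * norm (x /\<^sub>R r - z /\<^sub>R r)"
        using conjunct2[OF near_unit[OF unit]] by blast
      ultimately have "\<bar>m (x /\<^sub>R r) - 0\<bar> \<le> L * norm (x /\<^sub>R r - z /\<^sub>R r)"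
        by (simp only: unit(2) inverse_1 scaleR_one)
      then have "\<bar>m (x /\<^sub>R norm x)\<bar> \<le> L * norm (x /\<^sub>R r - z /\<^sub>R r)"
        using m_x by simp
      also have "\<dots> \<le> L * r powr (- a)" using xz \<open>0 \<le> L\<close> by (rule mult_left_mono)
      finally show ?thesis .
    qed
    have far: "B \<le> B / \<epsilon> * r powr (- a)" if "\<not> r powr (- a) \<le> \<epsilon>"
      using that \<epsilon>(1) abs_ge_zero[of "m (x /\<^sub>R norm x)"] bounded
      by (simp add: field_simps mult_left_mono)
    have C_ge: "L * r powr (- a) \<le> C * r powr (- a)" "B / \<epsilon> * r powr (- a) \<le> C * r powr (- a)"
      by (intro mult_right_mono; simp add: C_def)+
    have "\<bar>m (x /\<^sub>R norm x)\<bar> \<le> C * r powr (- a)"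
    proof (cases "r powr (- a) \<le> \<epsilon>")
      case True
      then show ?thesis using decay C_ge(1) by linarith
    next
      case False
      then show ?thesis using far bounded C_ge(2) by linarith
    qed
    moreover have "\<bar>m (x /\<^sub>R norm x)\<bar> \<le> C" using bounded by (simp add: C_def)
    ultimately show "\<bar>m (x /\<^sub>R norm x)\<bar> \<le> C \<and> \<bar>m (x /\<^sub>R norm x)\<bar> \<le> C * norm x powr (- a)"
      by (simp add: r_def)
  qed
qed

theorem lemma4:
  fixes \<Sigma> \<Sigma>t :: "'a::euclidean_space set"
    and m1 :: "'a \<Rightarrow> real" and lam1 eta :: real
    and p :: real and u :: "'a \<Rightarrow> real" and K Kt :: "'a set"
    and G :: "real \<Rightarrow> 'a set" and v :: "real \<Rightarrow> 'a \<Rightarrow> real"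
  assumes dim: "DIM('a) \<ge> 2"
    and sub: "\<Sigma> \<subseteq> sphere 0 1"
    and opn: "openin (top_of_set (sphere 0 1)) \<Sigma>"
    and conn: "connected \<Sigma>" and ne: "\<Sigma> \<noteq> {}"
    and reg: "LB_regular \<Sigma>"
    and lam_pos: "lam1 > 0"
    and eig: "dirichlet_eigenpair \<Sigma> lam1 m1"
    and m1_pos: "\<forall>\<theta>\<in>\<Sigma>. m1 \<theta> > 0"
    and principal: "\<forall>lam m. dirichlet_eigenpair \<Sigma> lam m \<longrightarrow> lam1 \<le> lam"
    and subt: "\<Sigma>t \<subseteq> sphere 0 1"
    and opnt: "openin (top_of_set (sphere 0 1)) \<Sigma>t"
    and connt: "connected \<Sigma>t"
    and ext_sub: "\<Sigma> \<subseteq> \<Sigma>t"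
    and ext_dist: "\<exists>\<delta>>0. \<forall>x\<in>sph_boundary \<Sigma>. \<forall>y\<in>sph_boundary \<Sigma>t. \<delta> \<le> dist x y"
    and ext_C2: "sph_C2 \<Sigma>t m1"
    and ext_eq: "\<forall>\<theta>\<in>\<Sigma>t. LB m1 \<theta> = - lam1 * m1 \<theta>"
    and p_def: "p = sqrt (lam1 + (real DIM('a) / 2 - 1)\<^sup>2) - (real DIM('a) / 2 - 1)"
    and u_def: "u = (\<lambda>x. norm x powr p * m1 (x /\<^sub>R norm x))"
    and K_def: "K = cone_of \<Sigma>"
    and Kt_def: "Kt = cone_of \<Sigma>t"
    and eta_pos: "eta > 0"
    and eta1: "K \<subseteq> cone_nbhd K (4 * eta)"
    and eta2: "cone_nbhd K (4 * eta) \<subseteq> Kt"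
    and G_def: "G = (\<lambda>a. cone_nbhd K eta \<inter>
                   (K \<union> {x. x \<notin> K \<and> infdist x (frontier K) \<le> norm x powr (1 - a)}))"
    and v_def: "v = (\<lambda>a x. if x \<in> G a then u x else norm x powr (p - a))"
  shows "\<forall>a>0. \<exists>C. \<forall>x. x \<notin> K \<longrightarrow> \<bar>v a x\<bar> \<le> C * (1 + norm x powr (p - a))"
proof -
  have m1_boundary: "\<forall>\<theta>\<in>sph_boundary \<Sigma>. m1 \<theta> = 0"
    using eig by (simp add: dirichlet_eigenpair_def)
  have nbhd_sub: "cone_nbhd (cone_of \<Sigma>) (4 * eta) \<subseteq> cone_of \<Sigma>t"
    using eta2 by (simp add: K_def Kt_def)
  have "p > 0" using sqrt_add_square_gt[OF lam_pos] p_def by simp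
  have "\<exists>C. \<forall>x. x \<notin> K \<longrightarrow> \<bar>v a x\<bar> \<le> C * (1 + norm x powr (p - a))" for a
  proof -
    obtain C where C: "\<forall>x\<in>cone_nbhd K eta. x \<noteq> 0 \<longrightarrow>
        infdist x (frontier K) \<le> norm x powr (1 - a) \<longrightarrow>
        \<bar>m1 (x /\<^sub>R norm x)\<bar> \<le> C \<and> \<bar>m1 (x /\<^sub>R norm x)\<bar> \<le> C * norm x powr (- a)"
      using zero_homogeneous_decay_near_frontier[OF sub opn m1_boundary ext_C2 eta_pos nbhd_sub]
      unfolding K_def by blast
    have "\<bar>v a x\<bar> \<le> max 1 C * (1 + norm x powr (p - a))" if "x \<notin> K" for x
    proof (cases "x \<in> G a \<and> x \<noteq> 0")
      case True
      then have "x \<in> cone_nbhd K eta" "infdist x (frontier K) \<le> norm x powr (1 - a)"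
        using \<open>x \<notin> K\<close> by (auto simp: G_def)
      then have "\<bar>v a x\<bar> \<le> C * (1 + norm x powr (p - a))"
        using C True \<open>p > 0\<close> powr_mult_le_one_plus_powr[of "norm x" p "\<bar>m1 (x /\<^sub>R norm x)\<bar>" C a]
        by (simp add: v_def u_def abs_mult)
      moreover have "C * (1 + norm x powr (p - a)) \<le> max 1 C * (1 + norm x powr (p - a))"
        by (intro mult_right_mono) auto
      ultimately show ?thesis by linarith
    next
      case False
      then have "\<bar>v a x\<bar> \<le> norm x powr (p - a)" by (auto simp: v_def u_def)
      moreover have "1 + norm x powr (p - a) \<le> max 1 C * (1 + norm x powr (p - a))"
        using mult_right_mono[of 1 "max 1 C" "1 + norm x powr (p - a)"] by simp
      ultimately show ?thesis by linarith
    qed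
    then show ?thesis by blast
  qed
  then show ?thesis by blast
qed

end
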